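(* Fix $\epsilon>0$. For $x\in X$ define $g_\epsilon(x)=\sum_{n=0}^\infty e^{-n\epsilon}\mu_n(x)$ if $\lambda_*(x)=0$, and $g_\epsilon(x)=1$ otherwise; write $g^\alpha_\epsilon=g_\epsilon|_{X_\alpha}$. Then for every $x\in X_\alpha$ with $\lambda_*(x)=0$ and every plaque chain $\mathcal{Q}=\{P_\alpha(x),P_\beta(y)\}$ of length one, $$e^{-\epsilon}g^\alpha_\epsilon(x)\le g^\beta_\epsilon(y)\cdot h_{\mathcal{Q}}'(x)\le e^{\epsilon}g^\alpha_\epsilon(x).$$
   Context: $M$ is a closed Riemannian manifold with a codimension-one $C^1$-foliation with oriented normal bundle; fix a finite regular atlas of transversally orientation-preserving charts $\varphi_\alpha\colon U_\alpha\to(-1,1)^n\times(-1,1)$ with transverse coordinate spaces $X_\alpha=(-1,1)$ and $X$ their disjoint union; $P_\alpha(x)$ is the plaque with transverse coordinate $x$; transition maps $h_{\beta\alpha}$ send $x$ to $y$ when $P_\alpha(x)\cap P_\beta(y)\ne\emptyset$; for a plaque chain $\mathcal{P}$ (sequence of plaques with consecutive ones intersecting) of length $\|\mathcal{P}\|$ (number of plaques minus one), $h_{\mathcal{P}}$ is the composition of transition maps on its maximal connected domain $D_{\mathcal{P}}$. $\mu_0(x)=1$, $\mu_n(x)=\sup\{h'_{\mathcal{P}}(x):x\in D_{\mathcal{P}},\|\mathcal{P}\|\le n\}$, and $\lambda_*(x)=\limsup_n\frac1n\log\mu_n(x)\ge0$; the series defining $g_\epsilon$ converges when $\lambda_*(x)=0$,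 and $\lambda_*$ is constant on holonomy orbits. *)

theory Defs
  imports "HOL-Analysis.Analysis" "HOL-Library.Liminf_Limsup"
begin

text \<open>Charts phi a : U a -> (-1,1)^n x (-1,1); the last coordinate is the transverse one.\<close>

definition cube :: "(real^'n) set" where
  "cube = {v. \<forall>k. \<bar>v $ k\<bar> < 1}"

definition plaque :: "('i \<Rightarrow> 'm set) \<Rightarrow> ('i \<Rightarrow> 'm \<Rightarrow> (real^'n) \<times> real) \<Rightarrow> 'i \<Rightarrow> real \<Rightarrow> 'm set" where
  "plaque U \<phi> a x = {p \<in> U a. snd (\<phi> a p) = x}"

definition plaque_meets :: "('i \<Rightarrow> 'm set) \<Rightarrow> ('i \<Rightarrow> 'm \<Rightarrow> (real^'n) \<times> real) \<Rightarrow> 'i \<Rightarrow> real \<Rightarrow> 'i \<Rightarrow> real \<Rightarrow> bool" where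
  "plaque_meets U \<phi> a x b y \<longleftrightarrow> plaque U \<phi> a x \<inter> plaque U \<phi> b y \<noteq> {}"

text \<open>The rest is expressed in terms of an abstract meeting relation R (instantiated
  with plaque_meets). Domain and transition map h_{ba}: x maps to y when P_a(x) meets P_b(y).\<close>

definition tdom :: "('i \<Rightarrow> real \<Rightarrow> 'i \<Rightarrow> real \<Rightarrow> bool) \<Rightarrow> 'i \<Rightarrow> 'i \<Rightarrow> real set" where
  "tdom R b a = {x. -1 < x \<and> x < 1 \<and> (\<exists>y. R a x b y)}"

definition htrans :: "('i \<Rightarrow> real \<Rightarrow> 'i \<Rightarrow> real \<Rightarrow> bool) \<Rightarrow> 'i \<Rightarrow> 'i \<Rightarrow> real \<Rightarrow> real" where
  "htrans R b a x = (THE y. R a x b y)"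

definition regular_foliated_atlas ::
  "'m set \<Rightarrow> 'i set \<Rightarrow> ('i \<Rightarrow> 'm set) \<Rightarrow> ('i \<Rightarrow> 'm \<Rightarrow> (real^'n) \<times> real) \<Rightarrow> bool" where
  "regular_foliated_atlas M I U \<phi> \<longleftrightarrow>
     finite I \<and> I \<noteq> {} \<and> (\<Union>a\<in>I. U a) = M \<and>
     (\<forall>a\<in>I. U a \<subseteq> M \<and> bij_betw (\<phi> a) (U a) (cube \<times> {-1<..<1})) \<and>
     \<comment> \<open>regularity: a plaque meets at most one plaque of another chart\<close>
     (\<forall>a\<in>I. \<forall>b\<in>I. \<forall>x y y'. plaque_meets U \<phi> a x b y \<longrightarrow> plaque_meets U \<phi> a x b y' \<longrightarrow> y = y') \<and>
     \<comment> \<open>transition maps are C^1, transversally orientation preserving, with derivatives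
         bounded away from 0 and infinity (they extend to the closure of their domains)\<close>
     (\<exists>C>0. \<forall>a\<in>I. \<forall>b\<in>I.
        open (tdom (plaque_meets U \<phi>) b a) \<and>
        (\<exists>h'. continuous_on (tdom (plaque_meets U \<phi>) b a) h' \<and>
           (\<forall>x\<in>tdom (plaque_meets U \<phi>) b a.
              (htrans (plaque_meets U \<phi>) b a has_real_derivative h' x) (at x) \<and>
              1 / C \<le> h' x \<and> h' x \<le> C)))"

text \<open>A plaque chain is a nonempty list of plaques (chart index, transverse coordinate),
  consecutive ones intersecting. Its length is the number of plaques minus one.\<close>

definition plaque_chain :: "'i set \<Rightarrow> ('i \<Rightarrow> real \<Rightarrow> 'i \<Rightarrow> real \<Rightarrow> bool) \<Rightarrow> ('i \<times> real) list \<Rightarrow> bool" where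
  "plaque_chain I R ps \<longleftrightarrow> ps \<noteq> [] \<and>
     (\<forall>p\<in>set ps. fst p \<in> I \<and> -1 < snd p \<and> snd p < 1) \<and>
     (\<forall>i. Suc i < length ps \<longrightarrow> R (fst (ps ! i)) (snd (ps ! i)) (fst (ps ! Suc i)) (snd (ps ! Suc i)))"

definition chain_length :: "('i \<times> real) list \<Rightarrow> nat" where
  "chain_length ps = length ps - 1"

fun hcomp :: "('i \<Rightarrow> real \<Rightarrow> 'i \<Rightarrow> real \<Rightarrow> bool) \<Rightarrow> ('i \<times> real) list \<Rightarrow> real \<Rightarrow> real" where
  "hcomp R (p # q # ps) x = hcomp R (q # ps) (htrans R (fst q) (fst p) x)"
| "hcomp R _ x = x"

fun cdom :: "('i \<Rightarrow> real \<Rightarrow> 'i \<Rightarrow> real \<Rightarrow> bool) \<Rightarrow> ('i \<times> real) list \<Rightarrow> real set" where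
  "cdom R (p # q # ps) = {x \<in> tdom R (fst q) (fst p). htrans R (fst q) (fst p) x \<in> cdom R (q # ps)}"
| "cdom R _ = {-1<..<1}"

definition chain_dom :: "('i \<Rightarrow> real \<Rightarrow> 'i \<Rightarrow> real \<Rightarrow> bool) \<Rightarrow> ('i \<times> real) list \<Rightarrow> real set" where
  "chain_dom R ps = connected_component_set (cdom R ps) (snd (hd ps))"

text \<open>Points of X (disjoint union of the X_a) are pairs (a, x).\<close>
definition mu :: "'i set \<Rightarrow> ('i \<Rightarrow> real \<Rightarrow> 'i \<Rightarrow> real \<Rightarrow> bool) \<Rightarrow> nat \<Rightarrow> 'i \<times> real \<Rightarrow> real" where
  "mu I R n p = (if n = 0 then 1 else
     Sup {deriv (hcomp R ps) (snd p) | ps. plaque_chain I R ps \<and> fst (hd ps) = fst p \<and>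
            snd p \<in> chain_dom R ps \<and> chain_length ps \<le> n})"

definition lambda_star :: "'i set \<Rightarrow> ('i \<Rightarrow> real \<Rightarrow> 'i \<Rightarrow> real \<Rightarrow> bool) \<Rightarrow> 'i \<times> real \<Rightarrow> ereal" where
  "lambda_star I R p = limsup (\<lambda>n. ereal (ln (mu I R n p) / real n))"

definition g_eps :: "'i set \<Rightarrow> ('i \<Rightarrow> real \<Rightarrow> 'i \<Rightarrow> real \<Rightarrow> bool) \<Rightarrow> real \<Rightarrow> 'i \<times> real \<Rightarrow> real" where
  "g_eps I R \<epsilon> p = (if lambda_star I R p = 0
      then (\<Sum>n. exp (- real n * \<epsilon>) * mu I R n p) else 1)"

end

theory Submission
  imports Defs
begin

text \<open>Prepending the plaque \<open>P\<^sub>\<alpha>(x)\<close> to a chain starting at \<open>P\<^sub>\<beta>(y)\<close> and, by the symmetry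
  of the meeting relation, \<open>P\<^sub>\<beta>(y)\<close> to one starting at \<open>P\<^sub>\<alpha>(x)\<close> gives
  \<open>h' \<mu>\<^sub>n(y) \<le> \<mu>\<^sub>n\<^sub>+\<^sub>1(x)\<close> and \<open>\<mu>\<^sub>n(x) \<le> h' \<mu>\<^sub>n\<^sub>+\<^sub>1(y)\<close>, where \<open>h'\<close> is the derivative of the
  transition map at \<open>x\<close> (the inverse transition has derivative \<open>1/h'\<close>). The first recurrence shows
  that \<open>\<mu>\<^sub>n(y)\<close> also grows subexponentially, so both series converge, and comparing them term by
  term after an index shift costs exactly one factor \<open>e\<^sup>\<epsilon>\<close>.\<close>

lemma summable_exp_weighted_subexponential:
  fixes A :: "nat \<Rightarrow> real"
  assumes eps: "\<epsilon> > 0" and pos: "\<And>n. 0 < A n"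
    and growth: "limsup (\<lambda>n. ereal (ln (A n) / real n)) \<le> 0"
  shows "summable (\<lambda>n. exp (- real n * \<epsilon>) * A n)"
proof (rule summable_comparison_test_ev)
  have "eventually (\<lambda>n. ereal (ln (A n) / real n) < ereal (\<epsilon>/2)) sequentially"
    by (rule Limsup_lessD, rule order.strict_trans1[OF growth]) (simp add: eps)
  then show "eventually (\<lambda>n. norm (exp (- real n * \<epsilon>) * A n) \<le> exp (- \<epsilon>/2) ^ n) sequentially"
    using eventually_gt_at_top[of "0::nat"]
  proof eventually_elim
    case (elim n)
    then have "ln (A n) < \<epsilon>/2 * real n"
      by (simp add: divide_less_eq mult.commute)
    then have "A n < exp (\<epsilon>/2 * real n)"
      using pos[of n] by (metis exp_less_mono exp_ln)
    then have "exp (- real n * \<epsilon>) * A n \<le> exp (- real n * \<epsilon>) * exp (\<epsilon>/2 * real n)"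
      by simp
    also have "\<dots> = exp (- \<epsilon>/2) ^ n"
      by (simp add: exp_add[symmetric] exp_of_nat_mult[symmetric] algebra_simps)
    finally show ?case using pos[of n] by simp
  qed
  show "summable (\<lambda>n. exp (- \<epsilon>/2) ^ n)"
    using eps by (intro summable_geometric) simp
qed

lemma limsup_ln_div_le_0_shift:
  fixes A B :: "nat \<Rightarrow> real"
  assumes c: "c > 0" and pos: "\<And>n. 0 < B n" and le: "\<And>n. c * B n \<le> A (Suc n)"
    and growth: "limsup (\<lambda>n. ereal (ln (A n) / real n)) \<le> 0"
  shows "limsup (\<lambda>n. ereal (ln (B n) / real n)) \<le> 0"
proof (rule ereal_le_epsilon2, unfold add_0_left)
  fix e :: real assume e: "0 < e"
  have "eventually (\<lambda>n. ereal (ln (A n) / real n) < ereal (e/2)) sequentially"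
    by (rule Limsup_lessD, rule order.strict_trans1[OF growth]) (simp add: e)
  then have "eventually (\<lambda>n. ln (A n) < e/2 * real n) sequentially"
    using eventually_gt_at_top[of "0::nat"] by eventually_elim (simp add: divide_less_eq)
  then have "eventually (\<lambda>n. ln (A (Suc n)) < e/2 * real (Suc n)) sequentially"
    using eventually_sequentially_Suc[of "\<lambda>n. ln (A n) < e/2 * real n"] by simp
  moreover obtain K :: nat where "(e/2 - ln c) / (e/2) \<le> real K"
    using real_arch_simple by blast
  then have "eventually (\<lambda>n. e/2 - ln c \<le> e/2 * real n) sequentially"
    using e by (auto simp: eventually_sequentially divide_le_eq mult.commute
        intro!: exI[of _ K] elim!: order.trans)
  ultimately have "eventually (\<lambda>n. ereal (ln (B n) / real n) \<le> ereal e) sequentially"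
    using eventually_gt_at_top[of "0::nat"]
  proof eventually_elim
    case (elim n)
    have "ln c + ln (B n) = ln (c * B n)"
      using c pos[of n] by (simp add: ln_mult)
    also have "\<dots> \<le> ln (A (Suc n))"
      using le[of n] c pos[of n] by (intro ln_mono) auto
    finally have "ln c + ln (B n) \<le> ln (A (Suc n))" .
    then have "ln (B n) \<le> e * real n"
      using elim by (simp add: algebra_simps)
    then show ?case using elim by (simp add: divide_le_eq)
  qed
  then show "limsup (\<lambda>n. ereal (ln (B n) / real n)) \<le> ereal e"
    by (rule Limsup_bounded)
qed

lemma limsup_ln_div_ge_0:
  fixes A :: "nat \<Rightarrow> real"
  assumes "\<And>n. 1 \<le> A n"
  shows "0 \<le> limsup (\<lambda>n. ereal (ln (A n) / real n))"
  by (rule le_Limsup) (use assms in auto)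

lemma suminf_exp_weighted_shift_le:
  fixes A B :: "nat \<Rightarrow> real"
  assumes sA: "summable (\<lambda>n. exp (- real n * \<epsilon>) * A n)"
    and sB: "summable (\<lambda>n. exp (- real n * \<epsilon>) * B n)"
    and A0: "0 \<le> A 0" and le: "\<And>n. c * B n \<le> A (Suc n)"
  shows "c * (\<Sum>n. exp (- real n * \<epsilon>) * B n) \<le> exp \<epsilon> * (\<Sum>n. exp (- real n * \<epsilon>) * A n)"
proof -
  define E where "E n = exp (- real n * \<epsilon>)" for n
  have shift: "E n * A (Suc n) = exp \<epsilon> * (E (Suc n) * A (Suc n))" for n
    by (simp add: E_def algebra_simps exp_add[symmetric])
  have sA': "summable (\<lambda>n. E n * A n)" and sB': "summable (\<lambda>n. E n * B n)"
    using sA sB by (simp_all add: E_def)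
  have sAS: "summable (\<lambda>n. E (Suc n) * A (Suc n))"
    using sA' by (subst summable_Suc_iff)
  then have sAS': "summable (\<lambda>n. E n * A (Suc n))"
    unfolding shift by (rule summable_mult)
  have sB'': "summable (\<lambda>n. E n * (c * B n))"
    using summable_mult[OF sB', of c] by (simp add: mult_ac)
  have "c * (\<Sum>n. E n * B n) = (\<Sum>n. E n * (c * B n))"
    using suminf_mult[OF sB', of c] by (simp add: mult_ac)
  also have "\<dots> \<le> (\<Sum>n. E n * A (Suc n))"
    using le sB'' sAS' by (intro suminf_le mult_left_mono) (auto simp: E_def)
  also have "\<dots> = exp \<epsilon> * (\<Sum>n. E (Suc n) * A (Suc n))"
    unfolding shift using sAS by (rule suminf_mult)
  also have "\<dots> = exp \<epsilon> * ((\<Sum>n. E n * A n) - A 0)"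
    using suminf_split_head[OF sA'] by (simp add: E_def)
  also have "\<dots> \<le> exp \<epsilon> * (\<Sum>n. E n * A n)"
    using A0 by simp
  finally show ?thesis by (simp add: E_def)
qed

lemma hcomp_trivial: "length ps \<le> 1 \<Longrightarrow> hcomp R ps = (\<lambda>z. z)"
  by (cases ps) (auto intro!: ext)

lemma hcomp_Cons_Cons:
  "hcomp R (p # q # ps) = (\<lambda>z. hcomp R (q # ps) (htrans R (fst q) (fst p) z))"
  by (rule ext) simp

lemma plaque_chain_Cons_Cons:
  "plaque_chain I R (p # q # ps) \<longleftrightarrow> fst p \<in> I \<and> -1 < snd p \<and> snd p < 1 \<and>
     R (fst p) (snd p) (fst q) (snd q) \<and> plaque_chain I R (q # ps)"
  unfolding plaque_chain_def by (auto simp: nth_Cons split: nat.splits)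

lemma plaque_chain_single: "plaque_chain I R [p] \<longleftrightarrow> fst p \<in> I \<and> -1 < snd p \<and> snd p < 1"
  unfolding plaque_chain_def by auto

locale transversal_atlas =
  fixes I :: "'i set" and R :: "'i \<Rightarrow> real \<Rightarrow> 'i \<Rightarrow> real \<Rightarrow> bool" and C :: real
  assumes meets_range: "\<And>a u b v. a \<in> I \<Longrightarrow> R a u b v \<Longrightarrow> -1 < u \<and> u < 1"
    and meets_sym: "\<And>a u b v. R a u b v \<Longrightarrow> R b v a u"
    and meets_unique: "\<And>a b x y y'. a \<in> I \<Longrightarrow> b \<in> I \<Longrightarrow> R a x b y \<Longrightarrow> R a x b y' \<Longrightarrow> y = y'"
    and C_ge_1: "C \<ge> 1"
    and open_tdom: "\<And>a b. a \<in> I \<Longrightarrow> b \<in> I \<Longrightarrow> open (tdom R b a)"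
    and htrans_derivative: "\<And>a b x. a \<in> I \<Longrightarrow> b \<in> I \<Longrightarrow> x \<in> tdom R b a \<Longrightarrow>
        \<exists>D. (htrans R b a has_real_derivative D) (at x) \<and> 1/C \<le> D \<and> D \<le> C"

lemma regular_foliated_atlas_transversal_atlas:
  assumes "regular_foliated_atlas M I U \<phi>"
  shows "\<exists>C. transversal_atlas I (plaque_meets U \<phi>) C"
proof -
  let ?R = "plaque_meets U \<phi>"
  from assms obtain C where C: "C > 0" and CD: "\<forall>a\<in>I. \<forall>b\<in>I. open (tdom ?R b a) \<and>
        (\<exists>h'. continuous_on (tdom ?R b a) h' \<and>
           (\<forall>x\<in>tdom ?R b a. (htrans ?R b a has_real_derivative h' x) (at x) \<and> 1 / C \<le> h' x \<and> h' x \<le> C))"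
    unfolding regular_foliated_atlas_def by blast
  have bij: "\<And>a. a \<in> I \<Longrightarrow> bij_betw (\<phi> a) (U a) (cube \<times> {-1<..<1})"
    using assms unfolding regular_foliated_atlas_def by blast
  have "transversal_atlas I ?R (max C 1)"
  proof
    fix a u b v assume a: "a \<in> I" and "?R a u b v"
    then obtain p where "p \<in> U a" "snd (\<phi> a p) = u"
      unfolding plaque_meets_def plaque_def by blast
    then show "-1 < u \<and> u < 1" using bij_betwE[OF bij[OF a]] by force
  next
    fix a u b v assume "?R a u b v" then show "?R b v a u" unfolding plaque_meets_def by blast
  next
    fix a b x y y' assume "a \<in> I" "b \<in> I" "?R a x b y" "?R a x b y'"
    then show "y = y'" using assms unfolding regular_foliated_atlas_def by blast
  next
    fix a b x assume ab: "a \<in> I" "b \<in> I" and x: "x \<in> tdom ?R b a"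
    then obtain h' where "(htrans ?R b a has_real_derivative h' x) (at x)" "1 / C \<le> h' x" "h' x \<le> C"
      using CD by blast
    moreover have "1 / max C 1 \<le> 1 / C" using C by (simp add: frac_le)
    ultimately show "\<exists>D. (htrans ?R b a has_real_derivative D) (at x) \<and> 1 / max C 1 \<le> D \<and> D \<le> max C 1"
      by force
  qed (use CD in auto)
  then show ?thesis ..
qed

context transversal_atlas
begin

lemma htrans_eqI: "a \<in> I \<Longrightarrow> b \<in> I \<Longrightarrow> R a u b v \<Longrightarrow> htrans R b a u = v"
  unfolding htrans_def by (rule the_equality) (auto dest: meets_unique)

lemma tdom_memI: "a \<in> I \<Longrightarrow> R a u b v \<Longrightarrow> u \<in> tdom R b a"
  unfolding tdom_def using meets_range by blast

lemma htrans_has_deriv: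
  assumes "a \<in> I" "b \<in> I" "x \<in> tdom R b a"
  shows "(htrans R b a has_real_derivative deriv (htrans R b a) x) (at x)"
    and "1/C \<le> deriv (htrans R b a) x" and "deriv (htrans R b a) x \<le> C"
    and "0 < deriv (htrans R b a) x"
proof -
  obtain D where D: "(htrans R b a has_real_derivative D) (at x)" "1/C \<le> D" "D \<le> C"
    using htrans_derivative[OF assms] by blast
  then show "(htrans R b a has_real_derivative deriv (htrans R b a) x) (at x)"
    and "1/C \<le> deriv (htrans R b a) x" and "deriv (htrans R b a) x \<le> C"
    by (simp_all add: DERIV_imp_deriv)
  show "0 < deriv (htrans R b a) x"
    using D C_ge_1 by (simp add: DERIV_imp_deriv) (smt (verit) divide_pos_pos)
qed

lemma deriv_htrans_inverse:
  assumes I: "a \<in> I" "b \<in> I" and Rxy: "R a x b y"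
  shows "deriv (htrans R a b) y * deriv (htrans R b a) x = 1"
proof -
  have x: "x \<in> tdom R b a" and y: "y \<in> tdom R a b"
    using tdom_memI I Rxy meets_sym by blast+
  have "(htrans R a b has_real_derivative deriv (htrans R a b) y) (at (htrans R b a x))"
    using htrans_has_deriv(1)[OF I(2,1) y] by (simp add: htrans_eqI[OF I Rxy])
  from DERIV_chain2[OF this htrans_has_deriv(1)[OF I x]]
  have "((\<lambda>z. htrans R a b (htrans R b a z)) has_real_derivative
      deriv (htrans R a b) y * deriv (htrans R b a) x) (at x)" .
  moreover have "((\<lambda>z. htrans R a b (htrans R b a z)) has_real_derivative 1) (at x)"
  proof (rule has_field_derivative_transform_within_open[OF DERIV_ident open_tdom[OF I] x])
    fix z assume "z \<in> tdom R b a"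
    then obtain w where "R a z b w" unfolding tdom_def by blast
    then show "z = htrans R a b (htrans R b a z)"
      using htrans_eqI I meets_sym by metis
  qed
  ultimately show ?thesis by (rule DERIV_unique)
qed

lemma hcomp_has_bounded_deriv:
  "set (map fst ps) \<subseteq> I \<Longrightarrow> x \<in> cdom R ps \<Longrightarrow>
    \<exists>D. (hcomp R ps has_real_derivative D) (at x) \<and> 0 < D \<and> D \<le> C ^ (length ps - 1)"
proof (induction ps arbitrary: x rule: induct_list012)
  case (3 p q ps)
  let ?h = "htrans R (fst q) (fst p)"
  have I: "fst p \<in> I" "fst q \<in> I" "set (map fst (q # ps)) \<subseteq> I" and x: "x \<in> tdom R (fst q) (fst p)"
    using "3.prems" by auto
  obtain D where D: "(hcomp R (q # ps) has_real_derivative D) (at (?h x))" "0 < D"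
    "D \<le> C ^ length ps"
    using "3.IH"(2)[OF I(3)] "3.prems"(2) by auto
  note h = htrans_has_deriv[OF I(1,2) x]
  have "D * deriv ?h x \<le> C ^ length ps * C"
    using D h by (intro mult_mono) auto
  then show ?case
    using DERIV_chain2[OF D(1) h(1)] D(2) h(4)
    by (intro exI[of _ "D * deriv ?h x"]) (simp add: hcomp_Cons_Cons mult_ac)
qed (auto simp: hcomp_trivial intro!: exI[of _ 1] DERIV_ident)

text \<open>Only the charts of a chain matter for \<open>hcomp\<close> and \<open>cdom\<close>: following the orbit of \<open>u\<close>
  through them gives a plaque chain through \<open>u\<close>.\<close>

lemma plaque_chain_through:
  assumes "ps \<noteq> []" "set (map fst ps) \<subseteq> I" "u \<in> cdom R ps"
  shows "\<exists>qs. plaque_chain I R qs \<and> hd qs = (fst (hd ps), u) \<and> length qs = length ps \<and>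
    hcomp R qs = hcomp R ps \<and> cdom R qs = cdom R ps"
  using assms
proof (induction ps arbitrary: u rule: induct_list012)
  case (2 p)
  then show ?case by (intro exI[of _ "[(fst p, u)]"]) (auto simp: plaque_chain_single hcomp_trivial)
next
  case (3 p q ps)
  let ?v = "htrans R (fst q) (fst p) u"
  have I: "fst p \<in> I" "fst q \<in> I" and u: "u \<in> tdom R (fst q) (fst p)"
    and v: "?v \<in> cdom R (q # ps)"
    using "3.prems" by auto
  obtain qs where qs: "plaque_chain I R qs" "hd qs = (fst q, ?v)" "length qs = length (q # ps)"
    "hcomp R qs = hcomp R (q # ps)" "cdom R qs = cdom R (q # ps)"
    using "3.IH"(2)[OF _ _ v] "3.prems"(2) by auto
  then obtain rest where rest: "qs = (fst q, ?v) # rest" by (cases qs) auto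
  obtain w where "R (fst p) u (fst q) w" using u unfolding tdom_def by blast
  then have "R (fst p) u (fst q) ?v" using htrans_eqI[OF I] by auto
  then have "plaque_chain I R ((fst p, u) # qs)"
    using qs(1) I meets_range rest by (simp add: plaque_chain_Cons_Cons)
  then show ?case
    using qs rest by (intro exI[of _ "(fst p, u) # qs"]) (simp add: hcomp_Cons_Cons)
qed simp

text \<open>The set whose supremum is \<open>\<mu>\<^sub>n\<close>, with plaque chains relaxed to chart sequences defined
  at \<open>u\<close>; this makes prepending a chart trivial without changing the supremum.\<close>

definition chart_chain_derivs :: "nat \<Rightarrow> 'i \<Rightarrow> real \<Rightarrow> real set" where
  "chart_chain_derivs n a u = {deriv (hcomp R ps) u | ps. ps \<noteq> [] \<and> set (map fst ps) \<subseteq> I \<and>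
      fst (hd ps) = a \<and> u \<in> cdom R ps \<and> length ps \<le> Suc n}"

lemma one_mem_chart_chain_derivs: "a \<in> I \<Longrightarrow> -1 < u \<Longrightarrow> u < 1 \<Longrightarrow> 1 \<in> chart_chain_derivs n a u"
  unfolding chart_chain_derivs_def
  by (intro CollectI exI[of _ "[(a, u)]"]) (simp add: hcomp_trivial)

lemma chart_chain_derivs_le_pow: "d \<in> chart_chain_derivs n a u \<Longrightarrow> d \<le> C ^ n"
proof -
  assume "d \<in> chart_chain_derivs n a u"
  then obtain ps where ps: "d = deriv (hcomp R ps) u" "set (map fst ps) \<subseteq> I"
    "u \<in> cdom R ps" "length ps \<le> Suc n" unfolding chart_chain_derivs_def by blast
  obtain D where "(hcomp R ps has_real_derivative D) (at u)" "D \<le> C ^ (length ps - 1)"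
    using hcomp_has_bounded_deriv[OF ps(2,3)] by blast
  moreover have "C ^ (length ps - 1) \<le> C ^ n"
    using C_ge_1 ps(4) by (intro power_increasing) auto
  ultimately show ?thesis using ps(1) by (simp add: DERIV_imp_deriv)
qed

lemma chart_chain_derivs_0: "a \<in> I \<Longrightarrow> -1 < u \<Longrightarrow> u < 1 \<Longrightarrow> chart_chain_derivs 0 a u = {1}"
proof
  show "chart_chain_derivs 0 a u \<subseteq> {1}"
  proof
    fix d assume "d \<in> chart_chain_derivs 0 a u"
    then obtain ps where "d = deriv (hcomp R ps) u" "length ps \<le> 1"
      unfolding chart_chain_derivs_def by auto
    then show "d \<in> {1}" by (simp add: hcomp_trivial)
  qed
qed (simp add: one_mem_chart_chain_derivs)

lemma mu_eq_Sup_chart_chain_derivs: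
  assumes a: "a \<in> I" and u: "-1 < u" "u < 1"
  shows "mu I R n (a, u) = Sup (chart_chain_derivs n a u)"
proof (cases "n = 0")
  case True
  then show ?thesis using chart_chain_derivs_0[OF a u] by (simp add: mu_def)
next
  case False
  have "{deriv (hcomp R ps) u | ps. plaque_chain I R ps \<and> fst (hd ps) = a \<and>
          u \<in> chain_dom R ps \<and> chain_length ps \<le> n} = chart_chain_derivs n a u"
  proof (intro equalityI subsetI)
    fix d assume "d \<in> {deriv (hcomp R ps) u | ps. plaque_chain I R ps \<and> fst (hd ps) = a \<and>
          u \<in> chain_dom R ps \<and> chain_length ps \<le> n}"
    then obtain ps where "d = deriv (hcomp R ps) u" "plaque_chain I R ps" "fst (hd ps) = a"
      "u \<in> chain_dom R ps" "chain_length ps \<le> n" by auto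
    then show "d \<in> chart_chain_derivs n a u"
      unfolding chart_chain_derivs_def plaque_chain_def chain_length_def chain_dom_def
      using connected_component_subset by fastforce
  next
    fix d assume "d \<in> chart_chain_derivs n a u"
    then obtain ps where ps: "d = deriv (hcomp R ps) u" "ps \<noteq> []" "set (map fst ps) \<subseteq> I"
      "fst (hd ps) = a" "u \<in> cdom R ps" "length ps \<le> Suc n"
      unfolding chart_chain_derivs_def by blast
    then obtain qs where "plaque_chain I R qs" "hd qs = (a, u)" "length qs = length ps"
      "hcomp R qs = hcomp R ps" "cdom R qs = cdom R ps"
      using plaque_chain_through by metis
    with ps show "d \<in> {deriv (hcomp R ps) u | ps. plaque_chain I R ps \<and> fst (hd ps) = a \<and>
          u \<in> chain_dom R ps \<and> chain_length ps \<le> n}"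
      by (auto simp: chain_dom_def chain_length_def intro!: exI[of _ qs])
  qed
  then show ?thesis using False by (simp add: mu_def)
qed

lemma chart_chain_derivs_le_mu:
  "a \<in> I \<Longrightarrow> -1 < u \<Longrightarrow> u < 1 \<Longrightarrow> d \<in> chart_chain_derivs n a u \<Longrightarrow> d \<le> mu I R n (a, u)"
  using mu_eq_Sup_chart_chain_derivs chart_chain_derivs_le_pow by (metis bdd_aboveI cSup_upper)

lemma mu_ge_1: "a \<in> I \<Longrightarrow> -1 < u \<Longrightarrow> u < 1 \<Longrightarrow> 1 \<le> mu I R n (a, u)"
  using chart_chain_derivs_le_mu one_mem_chart_chain_derivs by blast

lemma chart_chain_derivs_Cons:
  assumes I: "a \<in> I" "b \<in> I" and Rxy: "R a x b y" and d: "d \<in> chart_chain_derivs n b y"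
  shows "d * deriv (htrans R b a) x \<in> chart_chain_derivs (Suc n) a x"
proof -
  obtain ps where ps: "d = deriv (hcomp R ps) y" "ps \<noteq> []" "set (map fst ps) \<subseteq> I"
    "fst (hd ps) = b" "y \<in> cdom R ps" "length ps \<le> Suc n"
    using d unfolding chart_chain_derivs_def by blast
  then obtain q qs where pq: "ps = q # qs" "fst q = b" by (cases ps) auto
  have x: "x \<in> tdom R b a" and hx: "htrans R b a x = y"
    using tdom_memI[OF I(1) Rxy] htrans_eqI[OF I Rxy] .
  obtain D where "(hcomp R ps has_real_derivative D) (at y)"
    using hcomp_has_bounded_deriv[OF ps(3,5)] by blast
  then have D: "(hcomp R ps has_real_derivative d) (at (htrans R b a x))"
    using ps(1) hx by (simp add: DERIV_imp_deriv)
  have "(hcomp R ((a, x) # ps) has_real_derivative d * deriv (htrans R b a) x) (at x)"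
    using DERIV_chain2[OF D htrans_has_deriv(1)[OF I x]] pq by (simp only: hcomp_Cons_Cons fst_conv)
  then have "d * deriv (htrans R b a) x = deriv (hcomp R ((a, x) # ps)) x"
    by (rule DERIV_imp_deriv[symmetric])
  moreover have "x \<in> cdom R ((a, x) # ps)"
    using x hx ps(5) pq by simp
  ultimately show ?thesis
    using I ps unfolding chart_chain_derivs_def mem_Collect_eq
    by (intro exI[of _ "(a, x) # ps"]) simp
qed

lemma deriv_htrans_mult_mu_le_mu_Suc:
  assumes I: "a \<in> I" "b \<in> I" and Rxy: "R a x b y"
  shows "deriv (htrans R b a) x * mu I R n (b, y) \<le> mu I R (Suc n) (a, x)"
proof -
  have x: "-1 < x" "x < 1" and y: "-1 < y" "y < 1"
    using meets_range I Rxy meets_sym by blast+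
  have h: "0 < deriv (htrans R b a) x"
    using htrans_has_deriv(4)[OF I tdom_memI[OF I(1) Rxy]] .
  have "Sup (chart_chain_derivs n b y) \<le> mu I R (Suc n) (a, x) / deriv (htrans R b a) x"
  proof (rule cSup_least)
    show "chart_chain_derivs n b y \<noteq> {}" using one_mem_chart_chain_derivs[OF I(2) y] by blast
  next
    fix d assume "d \<in> chart_chain_derivs n b y"
    then have "d * deriv (htrans R b a) x \<le> mu I R (Suc n) (a, x)"
      using chart_chain_derivs_le_mu[OF I(1) x chart_chain_derivs_Cons[OF I Rxy]] by blast
    then show "d \<le> mu I R (Suc n) (a, x) / deriv (htrans R b a) x"
      using h by (simp add: pos_le_divide_eq)
  qed
  then show ?thesis using mu_eq_Sup_chart_chain_derivs[OF I(2) y] h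
    by (simp add: pos_le_divide_eq mult.commute)
qed

lemma mu_le_deriv_htrans_mult_mu_Suc:
  assumes I: "a \<in> I" "b \<in> I" and Rxy: "R a x b y"
  shows "mu I R n (a, x) \<le> deriv (htrans R b a) x * mu I R (Suc n) (b, y)"
proof -
  have "mu I R n (a, x) = deriv (htrans R b a) x * (deriv (htrans R a b) y * mu I R n (a, x))"
    using deriv_htrans_inverse[OF I Rxy] by (simp add: algebra_simps)
  also have "\<dots> \<le> deriv (htrans R b a) x * mu I R (Suc n) (b, y)"
    using deriv_htrans_mult_mu_le_mu_Suc[OF I(2,1) meets_sym[OF Rxy]]
      htrans_has_deriv(4)[OF I tdom_memI[OF I(1) Rxy]] by simp
  finally show ?thesis .
qed

lemma g_eps_transition_bounds:
  assumes eps: "\<epsilon> > 0" and I: "a \<in> I" "b \<in> I" and Rxy: "R a x b y"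
    and lam: "lambda_star I R (a, x) = 0"
  shows "exp (- \<epsilon>) * g_eps I R \<epsilon> (a, x) \<le> g_eps I R \<epsilon> (b, y) * deriv (htrans R b a) x"
    and "g_eps I R \<epsilon> (b, y) * deriv (htrans R b a) x \<le> exp \<epsilon> * g_eps I R \<epsilon> (a, x)"
proof -
  define h where "h = deriv (htrans R b a) x"
  define A where "A n = mu I R n (a, x)" for n
  define B where "B n = mu I R n (b, y)" for n
  have h: "0 < h"
    unfolding h_def using htrans_has_deriv(4)[OF I tdom_memI[OF I(1) Rxy]] .
  have x: "-1 < x" "x < 1" and y: "-1 < y" "y < 1"
    using meets_range I Rxy meets_sym by blast+
  have A1: "1 \<le> A n" and B1: "1 \<le> B n" for n
    unfolding A_def B_def using mu_ge_1[OF I(1) x] mu_ge_1[OF I(2) y] .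
  have AB: "h * B n \<le> A (Suc n)" for n
    unfolding A_def B_def h_def using deriv_htrans_mult_mu_le_mu_Suc[OF I Rxy] .
  have "A n \<le> h * B (Suc n)" for n
    unfolding A_def B_def h_def using mu_le_deriv_htrans_mult_mu_Suc[OF I Rxy] .
  then have BA: "(1/h) * A n \<le> B (Suc n)" for n
    using h by (simp add: pos_divide_le_eq mult.commute)
  have Apos: "0 < A n" and Bpos: "0 < B n" for n
    using A1[of n] B1[of n] by linarith+
  have growthA: "limsup (\<lambda>n. ereal (ln (A n) / real n)) = 0"
    using lam unfolding lambda_star_def A_def .
  have "limsup (\<lambda>n. ereal (ln (B n) / real n)) \<le> 0"
    using limsup_ln_div_le_0_shift[where A=A and B=B, OF h Bpos AB] growthA by simp
  then have growthB: "limsup (\<lambda>n. ereal (ln (B n) / real n)) = 0"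
    using limsup_ln_div_ge_0[OF B1] by (rule antisym)
  have sA: "summable (\<lambda>n. exp (- real n * \<epsilon>) * A n)"
    and sB: "summable (\<lambda>n. exp (- real n * \<epsilon>) * B n)"
    using summable_exp_weighted_subexponential[OF eps] Apos Bpos growthA growthB by simp_all
  define SA SB where "SA = (\<Sum>n. exp (- real n * \<epsilon>) * A n)" and "SB = (\<Sum>n. exp (- real n * \<epsilon>) * B n)"
  have gA: "g_eps I R \<epsilon> (a, x) = SA" and gB: "g_eps I R \<epsilon> (b, y) = SB"
    using lam growthB unfolding g_eps_def SA_def SB_def A_def B_def lambda_star_def by simp_all
  have "(1/h) * SA \<le> exp \<epsilon> * SB"
    unfolding SA_def SB_def using suminf_exp_weighted_shift_le[OF sB sA _ BA] B1[of 0] by simp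
  then have "SA \<le> exp \<epsilon> * (SB * h)"
    using h by (simp add: pos_divide_le_eq mult_ac)
  then have "exp (- \<epsilon>) * SA \<le> exp (- \<epsilon>) * exp \<epsilon> * (SB * h)"
    by (simp add: mult.assoc)
  then show "exp (- \<epsilon>) * g_eps I R \<epsilon> (a, x) \<le> g_eps I R \<epsilon> (b, y) * deriv (htrans R b a) x"
    by (simp add: gA gB h_def exp_minus_inverse mult.commute[of "exp (- \<epsilon>)"])
  show "g_eps I R \<epsilon> (b, y) * deriv (htrans R b a) x \<le> exp \<epsilon> * g_eps I R \<epsilon> (a, x)"
    unfolding gA gB SA_def SB_def h_def[symmetric]
    using suminf_exp_weighted_shift_le[OF sA sB _ AB] A1[of 0] by (simp add: mult.commute)
qed

end

theorem lemma4p5: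
  fixes M :: "'m set" and I :: "'i set" and U :: "'i \<Rightarrow> 'm set"
    and \<phi> :: "'i \<Rightarrow> 'm \<Rightarrow> (real^'n) \<times> real"
    and \<epsilon> :: real and \<alpha> \<beta> :: 'i and x y :: real
  assumes atlas: "regular_foliated_atlas M I U \<phi>"
    and eps: "\<epsilon> > 0"
    and alpha: "\<alpha> \<in> I" and x: "-1 < x" "x < 1"
    and lam: "lambda_star I (plaque_meets U \<phi>) (\<alpha>, x) = 0"
    and Q: "plaque_chain I (plaque_meets U \<phi>) [(\<alpha>, x), (\<beta>, y)]"
  shows "exp (- \<epsilon>) * g_eps I (plaque_meets U \<phi>) \<epsilon> (\<alpha>, x)
           \<le> g_eps I (plaque_meets U \<phi>) \<epsilon> (\<beta>, y) * deriv (hcomp (plaque_meets U \<phi>) [(\<alpha>, x), (\<beta>, y)]) x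
         \<and> g_eps I (plaque_meets U \<phi>) \<epsilon> (\<beta>, y) * deriv (hcomp (plaque_meets U \<phi>) [(\<alpha>, x), (\<beta>, y)]) x
           \<le> exp \<epsilon> * g_eps I (plaque_meets U \<phi>) \<epsilon> (\<alpha>, x)"
proof -
  obtain C where "transversal_atlas I (plaque_meets U \<phi>) C"
    using regular_foliated_atlas_transversal_atlas[OF atlas] ..
  moreover have "\<beta> \<in> I" and "plaque_meets U \<phi> \<alpha> x \<beta> y"
    using Q by (simp_all add: plaque_chain_Cons_Cons plaque_chain_single)
  moreover have "hcomp (plaque_meets U \<phi>) [(\<alpha>, x), (\<beta>, y)] = htrans (plaque_meets U \<phi>) \<beta> \<alpha>"
    by (simp add: hcomp_Cons_Cons hcomp_trivial)
  ultimately show ?thesis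
    using transversal_atlas.g_eps_transition_bounds[OF _ eps alpha] lam by simp
qed

end
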